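(* Let $m\ge2$, $n\ge1$ be integers. Let $\mathcal{A}\in\mathbb{SF}_{m,n}$ have no zero blocks, and let $\mathcal{P}=([n],\mathbb{E})$ be the $m$-uniform multi-hypergraph whose $(0,1)$ associated tensor is $\mathcal{A}$. Then the following are equivalent: (1) $\mathcal{A}$ is $\{0,1\}$-cp; (2) $\mathcal{P}$ is a union of complete blocks on a partition of the vertex set: there exist pairwise disjoint nonempty sets $V_1,\dots,V_q$ with $V_1\cup\dots\cup V_q=[n]$ (so $n_1+\dots+n_q=n$ where $n_i=|V_i|$) such that $\mathbb{E}$ is exactly the set of all multisets of size $m$ whose elements all lie in a single $V_i$ for some $i$; (3) there exist $q\ge1$ and vectors $\mathbf{u}_1,\dots,\mathbf{u}_q\in\{0,1\}^n$ with $\mathcal{A}=\sum_{j=1}^q\mathbf{u}_j^m$ such that the $n\times q$ matrix $U=[\mathbf{u}_1,\dots,\mathbf{u}_q]$ satisfies $U^{T}U=\mathrm{diag}(n_1,\dots,n_q)$ for positive integers $n_1,\dots,n_q$ with $n_1+\dots+n_q=n$.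
   Context: $S(m,n)=\{(i_1,\dots,i_m): i_k\in[n]\}$. $\mathbb{SF}_{m,n}$ is the set of symmetric $m$th order $n$-dimensional real tensors with all entries in $\{0,1\}$. For a nonempty $I\subseteq[n]$, the principal subtensor of $\mathcal{A}$ determined by $I$ is the tensor $(a_{i_1\cdots i_m})$ with all $i_k\in I$; a zero block is a principal subtensor all of whose entries are $0$. For $\mathbf{u}\in\mathbb{R}^n$, $\mathbf{u}^m$ is the tensor with entries $u_{i_1}\cdots u_{i_m}$. A symmetric tensor $\mathcal{A}$ is $\{0,1\}$-cp if $\mathcal{A}=\sum_{j=1}^q\mathbf{u}_j^m$ for some $q\ge1$ and $\mathbf{u}_j\in\{0,1\}^n$. An $m$-uniform multi-hypergraph on $[n]$ is a pair $([n],\mathbb{E})$ with $\mathbb{E}$ a set of multisets of elements of $[n]$, each of cardinality $m$ counting repetitions. Its $(0,1)$ associated tensor is the tensor $\mathcal{A}\in\mathbb{SF}_{m,n}$ with $a_{i_1\cdots i_m}=1$ if the multiset $\{i_1,\dots,i_m\}\in\mathbb{E}$ and $0$ otherwise. *)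

theory Defs
  imports Complex_Main "HOL-Library.Multiset"
begin

text \<open>Index tuples S(m,n): lists of length m with entries in [n] = {1..n}.
A tensor of order m and dimension n is a function on index lists (only its values on
S(m,n) matter).\<close>

definition S :: "nat \<Rightarrow> nat \<Rightarrow> nat list set" where
  "S m n = {xs. length xs = m \<and> set xs \<subseteq> {1..n}}"

definition symmetric_tensor :: "nat \<Rightarrow> nat \<Rightarrow> (nat list \<Rightarrow> real) \<Rightarrow> bool" where
  "symmetric_tensor m n A \<longleftrightarrow>
     (\<forall>xs\<in>S m n. \<forall>ys\<in>S m n. mset xs = mset ys \<longrightarrow> A xs = A ys)"

definition SF :: "nat \<Rightarrow> nat \<Rightarrow> (nat list \<Rightarrow> real) set" where
  "SF m n = {A. symmetric_tensor m n A \<and> (\<forall>xs\<in>S m n. A xs = 0 \<or> A xs = 1)}"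

definition has_zero_block :: "nat \<Rightarrow> nat \<Rightarrow> (nat list \<Rightarrow> real) \<Rightarrow> bool" where
  "has_zero_block m n A \<longleftrightarrow>
     (\<exists>I. I \<noteq> {} \<and> I \<subseteq> {1..n} \<and> (\<forall>xs. length xs = m \<and> set xs \<subseteq> I \<longrightarrow> A xs = 0))"

definition tpow :: "(nat \<Rightarrow> real) \<Rightarrow> nat list \<Rightarrow> real" where
  "tpow u xs = prod_list (map u xs)"

definition binary_vec :: "nat \<Rightarrow> (nat \<Rightarrow> real) \<Rightarrow> bool" where
  "binary_vec n u \<longleftrightarrow> (\<forall>i\<in>{1..n}. u i = 0 \<or> u i = 1)"

definition is_sum_of_powers :: "nat \<Rightarrow> nat \<Rightarrow> (nat list \<Rightarrow> real) \<Rightarrow> nat \<Rightarrow> (nat \<Rightarrow> nat \<Rightarrow> real) \<Rightarrow> bool" where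
  "is_sum_of_powers m n A q u \<longleftrightarrow> (\<forall>xs\<in>S m n. A xs = (\<Sum>j=1..q. tpow (u j) xs))"

definition zero_one_cp :: "nat \<Rightarrow> nat \<Rightarrow> (nat list \<Rightarrow> real) \<Rightarrow> bool" where
  "zero_one_cp m n A \<longleftrightarrow> symmetric_tensor m n A \<and>
     (\<exists>q u. q \<ge> 1 \<and> (\<forall>j\<in>{1..q}. binary_vec n (u j)) \<and> is_sum_of_powers m n A q u)"

definition uniform_multihypergraph :: "nat \<Rightarrow> nat \<Rightarrow> nat multiset set \<Rightarrow> bool" where
  "uniform_multihypergraph m n E \<longleftrightarrow> (\<forall>e\<in>E. size e = m \<and> set_mset e \<subseteq> {1..n})"

definition assoc_tensor :: "nat \<Rightarrow> nat \<Rightarrow> nat multiset set \<Rightarrow> (nat list \<Rightarrow> real) \<Rightarrow> bool" where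
  "assoc_tensor m n E A \<longleftrightarrow> A \<in> SF m n \<and>
     (\<forall>xs\<in>S m n. A xs = (if mset xs \<in> E then 1 else 0))"

end

theory Submission
  imports Defs "HOL-Library.Disjoint_Sets" "HOL-Library.Indicator_Function"
begin

text \<open>For a 0/1 vector u, the entry of u^m at an index tuple is 1 exactly when all its indices lie
in the support of u; hence in a decomposition A = \<Sum>j u_j^m each entry of A counts the supports
containing the indices of the entry. Without zero blocks every diagonal entry a_{i...i} equals 1,
so every vertex lies in exactly one support: the nonempty supports partition [n], and the edges are
the multisets inside one block. Conversely, the indicator vectors of the blocks of a partition
decompose A, are pairwise orthogonal and have squared norms the block sizes.\<close>

definition ones :: "nat \<Rightarrow> (nat \<Rightarrow> real) \<Rightarrow> nat set" where
  "ones n u = {i\<in>{1..n}. u i = 1}"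

definition complete_block_edges :: "nat \<Rightarrow> nat set set \<Rightarrow> nat multiset set" where
  "complete_block_edges m P = {M. size M = m \<and> (\<exists>B\<in>P. set_mset M \<subseteq> B)}"

lemma tpow_indicator: "tpow (indicator B) xs = (if set xs \<subseteq> B then 1 else 0)"
  by (induction xs) (auto simp: tpow_def)

lemma tpow_binary_vec:
  assumes "binary_vec n u" and "set xs \<subseteq> {1..n}"
  shows "tpow u xs = tpow (indicator (ones n u)) xs"
  unfolding tpow_def
proof (rule arg_cong[where f = prod_list], rule map_cong[OF refl])
  fix i assume "i \<in> set xs"
  with assms show "u i = indicator (ones n u) i"
    by (auto simp: binary_vec_def ones_def indicator_def)
qed

lemma sum_indicator_eq_card:
  "finite J \<Longrightarrow> (\<Sum>j\<in>J. if P j then (1::real) else 0) = real (card {j\<in>J. P j})"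
  by (simp add: sum.If_cases Int_def conj_commute)

lemma sum_tpow_binary_vecs:
  assumes "finite J" and "\<forall>j\<in>J. binary_vec n (u j)" and "set xs \<subseteq> {1..n}"
  shows "(\<Sum>j\<in>J. tpow (u j) xs) = real (card {j\<in>J. set xs \<subseteq> ones n (u j)})"
proof -
  have "(\<Sum>j\<in>J. tpow (u j) xs) = (\<Sum>j\<in>J. if set xs \<subseteq> ones n (u j) then 1 else 0)"
  proof (intro sum.cong refl)
    fix j assume "j \<in> J"
    then show "tpow (u j) xs = (if set xs \<subseteq> ones n (u j) then 1 else 0)"
      using assms(2,3) tpow_binary_vec tpow_indicator by metis
  qed
  then show ?thesis
    using sum_indicator_eq_card[OF assms(1)] by simp
qed

lemma sum_indicator_products:
  fixes n :: nat
  assumes "B \<subseteq> {1..n}"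
  shows "(\<Sum>i=1..n. indicator B i * indicator C i :: real) = real (card (B \<inter> C))"
proof -
  have "(\<Sum>i=1..n. indicator B i * indicator C i :: real) = (\<Sum>i=1..n. if i \<in> B \<inter> C then 1 else 0)"
    by (intro sum.cong refl) (simp add: indicator_def)
  also have "\<dots> = real (card {i\<in>{1..n}. i \<in> B \<inter> C})"
    by (rule sum_indicator_eq_card) simp
  also have "{i\<in>{1..n}. i \<in> B \<inter> C} = B \<inter> C"
    using assms by auto
  finally show ?thesis .
qed

lemma card_disjoint_family_containing:
  assumes "disjoint_family_on V I" and "C \<noteq> {}"
  shows "card {j\<in>I. C \<subseteq> V j} = (if \<exists>j\<in>I. C \<subseteq> V j then 1 else 0)"
proof (cases "\<exists>j\<in>I. C \<subseteq> V j")
  case True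
  then obtain j where j: "j \<in> I" "C \<subseteq> V j" by blast
  have "k = j" if "k \<in> I" "C \<subseteq> V k" for k
  proof -
    have "V j \<inter> V k \<noteq> {}"
      using j(2) that(2) assms(2) by blast
    then show ?thesis
      using j(1) that(1) assms(1) by (auto simp: disjoint_family_on_def)
  qed
  then have "{k\<in>I. C \<subseteq> V k} = {j}"
    using j by blast
  with True show ?thesis by simp
next
  case False
  then have "{j\<in>I. C \<subseteq> V j} = {}" by blast
  then show ?thesis using False by (simp only: card.empty) simp
qed

lemma partition_on_enumeration:
  assumes "finite A" and "A \<noteq> {}" and "partition_on A P"
  obtains q :: nat and V where "q \<ge> 1" and "\<forall>i\<in>{1..q}. V i \<noteq> {}"
    and "disjoint_family_on V {1..q}" and "V ` {1..q} = P"
proof -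
  have "finite P"
    using finite_elements[OF assms(1,3)] .
  then obtain V where "bij_betw V {1..card P} P"
    using ex_bij_betw_nat_finite_1 by blast
  then have V_image: "V ` {1..card P} = P" and V_inj: "inj_on V {1..card P}"
    by (simp_all add: bij_betw_def)
  have "P \<noteq> {}"
    using assms(2,3) by (auto simp: partition_on_def)
  then have "card P \<ge> 1"
    using \<open>finite P\<close> by (simp add: Suc_leI card_gt_0_iff)
  moreover have "\<forall>i\<in>{1..card P}. V i \<noteq> {}"
    using V_image partition_onD3[OF assms(3)] by blast
  moreover have "disjoint_family_on V {1..card P}"
    unfolding disjoint_family_on_def
  proof (intro ballI impI)
    fix i j assume ij: "i \<in> {1..card P}" "j \<in> {1..card P}" "i \<noteq> j"
    then have "V i \<noteq> V j"
      using V_inj by (meson inj_on_contraD)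
    moreover have "V i \<in> P" "V j \<in> P"
      using ij V_image by blast+
    ultimately show "V i \<inter> V j = {}"
      using partition_onD2[OF assms(3)] by (simp add: pairwise_def disjnt_def)
  qed
  ultimately show ?thesis
    using that V_image by blast
qed

lemma binary_decomposition_entry:
  assumes "\<forall>j\<in>{1..q}. binary_vec n (u j)" and "is_sum_of_powers m n A q u" and "xs \<in> S m n"
  shows "A xs = real (card {j\<in>{1..q}. set xs \<subseteq> ones n (u j)})"
  using assms sum_tpow_binary_vecs[of "{1..q}" n u xs]
  by (simp add: is_sum_of_powers_def S_def)

lemma mem_edges_iff_entry:
  assumes "uniform_multihypergraph m n E" and "assoc_tensor m n E A"
  shows "M \<in> E \<longleftrightarrow> size M = m \<and> set_mset M \<subseteq> {1..n} \<and> A (sorted_list_of_multiset M) \<noteq> 0"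
proof (cases "size M = m \<and> set_mset M \<subseteq> {1..n}")
  case True
  then have "sorted_list_of_multiset M \<in> S m n"
    by (auto simp: S_def simp flip: size_mset)
  with True assms(2) show ?thesis
    by (simp add: assoc_tensor_def)
next
  case False
  with assms(1) show ?thesis
    by (auto simp: uniform_multihypergraph_def)
qed

lemma vertex_in_unique_ones:
  assumes "m \<ge> 1" and "A \<in> SF m n" and "\<not> has_zero_block m n A"
    and "\<forall>j\<in>{1..q}. binary_vec n (u j)" and "is_sum_of_powers m n A q u"
    and "i \<in> {1..n}"
  shows "\<exists>!j. j \<in> {1..q} \<and> i \<in> ones n (u j)"
proof -
  have diag: "replicate m i \<in> S m n"
    using assms(6) by (auto simp: S_def)
  have "A (replicate m i) \<noteq> 0"
  proof
    assume "A (replicate m i) = 0"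
    then have "\<forall>xs. length xs = m \<and> set xs \<subseteq> {i} \<longrightarrow> A xs = 0"
      by (metis replicate_length_same singletonD subsetD)
    with assms(3,6) show False
      unfolding has_zero_block_def by blast
  qed
  then have "A (replicate m i) = 1"
    using assms(2) diag by (auto simp: SF_def)
  moreover have "set (replicate m i) = {i}"
    using assms(1) by simp
  ultimately have "card {j\<in>{1..q}. i \<in> ones n (u j)} = 1"
    using binary_decomposition_entry[OF assms(4,5) diag] by simp
  then obtain j where "{j\<in>{1..q}. i \<in> ones n (u j)} = {j}"
    by (rule card_1_singletonE)
  then show ?thesis
    by (auto simp: set_eq_iff)
qed

lemma binary_decomposition_imp_block_partition:
  assumes "m \<ge> 1" and "A \<in> SF m n" and "\<not> has_zero_block m n A"
    and "uniform_multihypergraph m n E" and "assoc_tensor m n E A"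
    and "\<forall>j\<in>{1..q}. binary_vec n (u j)" and "is_sum_of_powers m n A q u"
  shows "\<exists>P. partition_on {1..n} P \<and> E = complete_block_edges m P"
proof -
  define P where "P = (\<lambda>j. ones n (u j)) ` {1..q} - {{}}"
  note unique = vertex_in_unique_ones[OF assms(1-3,6,7)]
  have "partition_on {1..n} P"
  proof (rule partition_onI)
    show "\<Union>P = {1..n}"
    proof
      show "\<Union>P \<subseteq> {1..n}"
        by (auto simp: P_def ones_def)
      show "{1..n} \<subseteq> \<Union>P"
      proof
        fix i assume "i \<in> {1..n}"
        then obtain j where "j \<in> {1..q}" "i \<in> ones n (u j)"
          using unique by blast
        then show "i \<in> \<Union>P"
          by (auto simp: P_def)
      qed
    qed
    fix p p' assume "p \<in> P" "p' \<in> P" "p \<noteq> p'"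
    then obtain j k where jk: "j \<in> {1..q}" "k \<in> {1..q}" "p = ones n (u j)" "p' = ones n (u k)"
      unfolding P_def by blast
    show "disjnt p p'"
      unfolding disjnt_iff
    proof (intro allI notI)
      fix i assume "i \<in> p \<and> i \<in> p'"
      then have "i \<in> {1..n}" "i \<in> ones n (u j)" "i \<in> ones n (u k)"
        using jk by (auto simp: ones_def)
      then have "j = k"
        using unique jk(1,2) by blast
      with jk \<open>p \<noteq> p'\<close> show False by simp
    qed
  qed (simp add: P_def)
  moreover have "E = complete_block_edges m P"
  proof (intro set_eqI)
    fix M :: "nat multiset"
    let ?xs = "sorted_list_of_multiset M"
    have "M \<in> E \<longleftrightarrow> size M = m \<and> set_mset M \<subseteq> {1..n} \<and> A ?xs \<noteq> 0"
      by (rule mem_edges_iff_entry[OF assms(4,5)])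
    also have "\<dots> \<longleftrightarrow> size M = m \<and> set_mset M \<subseteq> {1..n}
                        \<and> (\<exists>j\<in>{1..q}. set_mset M \<subseteq> ones n (u j))"
    proof (cases "size M = m \<and> set_mset M \<subseteq> {1..n}")
      case True
      then have "A ?xs = real (card {j\<in>{1..q}. set_mset M \<subseteq> ones n (u j)})"
        using binary_decomposition_entry[OF assms(6,7), of ?xs]
        by (auto simp: S_def simp flip: size_mset)
      with True show ?thesis
        by (auto simp: card_eq_0_iff)
    qed auto
    also have "\<dots> \<longleftrightarrow> M \<in> complete_block_edges m P"
    proof -
      have "size M = m \<Longrightarrow> set_mset M \<noteq> {}"
        using assms(1) by auto
      then show ?thesis
        by (auto simp: complete_block_edges_def P_def ones_def)
    qed
    finally show "M \<in> E \<longleftrightarrow> M \<in> complete_block_edges m P" .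
  qed
  ultimately show ?thesis by blast
qed

lemma sum_of_powers_block_indicators:
  assumes "m \<ge> 1" and "assoc_tensor m n E A" and "disjoint_family_on V {1..q}"
    and "E = {M. size M = m \<and> (\<exists>i\<in>{1..q}. set_mset M \<subseteq> V i)}"
  shows "is_sum_of_powers m n A q (\<lambda>j. indicator (V j))"
  unfolding is_sum_of_powers_def
proof
  fix xs assume xs: "xs \<in> S m n"
  then have "set xs \<noteq> {}"
    using assms(1) by (auto simp: S_def)
  have "(\<Sum>j=1..q. tpow (indicator (V j)) xs) = (\<Sum>j=1..q. if set xs \<subseteq> V j then 1 else 0)"
    by (simp add: tpow_indicator)
  also have "\<dots> = real (card {j\<in>{1..q}. set xs \<subseteq> V j})"
    by (rule sum_indicator_eq_card) simp
  also have "\<dots> = (if mset xs \<in> E then 1 else 0)"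
    using card_disjoint_family_containing[OF assms(3) \<open>set xs \<noteq> {}\<close>] assms(4) xs
    by (auto simp: S_def)
  also have "\<dots> = A xs"
    using assms(2) xs by (simp add: assoc_tensor_def)
  finally show "A xs = (\<Sum>j=1..q. tpow (indicator (V j)) xs)" ..
qed

lemma block_indexing_imp_orthogonal_decomposition:
  fixes V :: "nat \<Rightarrow> nat set"
  assumes "m \<ge> 1" and "assoc_tensor m n E A"
    and "q \<ge> 1" and "\<forall>i\<in>{1..q}. V i \<noteq> {}" and "disjoint_family_on V {1..q}"
    and "(\<Union>i\<in>{1..q}. V i) = {1..n}"
    and "E = {M. size M = m \<and> (\<exists>i\<in>{1..q}. set_mset M \<subseteq> V i)}"
  shows "\<exists>q u nn. q \<ge> 1 \<and> (\<forall>j\<in>{1..q}. binary_vec n (u j))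
           \<and> is_sum_of_powers m n A q u
           \<and> (\<forall>j\<in>{1..q}. nn j > (0::nat)) \<and> (\<Sum>j=1..q. nn j) = n
           \<and> (\<forall>j\<in>{1..q}. \<forall>k\<in>{1..q}.
                (\<Sum>i=1..n. u j i * u k i) = (if j = k then real (nn j) else 0))"
proof (intro exI conjI ballI)
  have V_sub: "V j \<subseteq> {1..n}" if "j \<in> {1..q}" for j
    using assms(6) that by blast
  then have V_finite: "finite (V j)" if "j \<in> {1..q}" for j
    using that finite_subset by blast
  show "q \<ge> 1" by (rule assms(3))
  show "binary_vec n (indicator (V j))" for j
    by (simp add: binary_vec_def indicator_def)
  show "is_sum_of_powers m n A q (\<lambda>j. indicator (V j))"
    by (rule sum_of_powers_block_indicators[OF assms(1,2,5,7)])
  show "card (V j) > 0" if "j \<in> {1..q}" for j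
    using that assms(4) V_finite by (simp add: card_gt_0_iff)
  show "(\<Sum>j=1..q. card (V j)) = n"
    using card_UN_disjoint[of "{1..q}" V] V_finite assms(5,6)
    by (simp add: disjoint_family_on_def)
  show "(\<Sum>i=1..n. indicator (V j) i * indicator (V k) i)
          = (if j = k then real (card (V j)) else 0)" if "j \<in> {1..q}" "k \<in> {1..q}" for j k
    using sum_indicator_products[OF V_sub[OF that(1)], of "V k"] assms(5) that
    by (auto simp: disjoint_family_on_def)
qed

theorem mainTheorem4:
  fixes m n :: nat and A :: "nat list \<Rightarrow> real" and E :: "nat multiset set"
  assumes "m \<ge> 2" and "n \<ge> 1"
    and "A \<in> SF m n"
    and "\<not> has_zero_block m n A"
    and "uniform_multihypergraph m n E"
    and "assoc_tensor m n E A"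
  shows "(zero_one_cp m n A \<longleftrightarrow>
           (\<exists>(q::nat) V. q \<ge> 1 \<and> (\<forall>i\<in>{1..q}. V i \<noteq> {})
              \<and> (\<forall>i\<in>{1..q}. \<forall>j\<in>{1..q}. i \<noteq> j \<longrightarrow> V i \<inter> V j = {})
              \<and> (\<Union>i\<in>{1..q}. V i) = {1..n}
              \<and> E = {M. size M = m \<and> (\<exists>i\<in>{1..q}. set_mset M \<subseteq> V i)}))
       \<and> (zero_one_cp m n A \<longleftrightarrow>
           (\<exists>q u nn. q \<ge> 1 \<and> (\<forall>j\<in>{1..q}. binary_vec n (u j))
              \<and> is_sum_of_powers m n A q u
              \<and> (\<forall>j\<in>{1..q}. nn j > (0::nat)) \<and> (\<Sum>j=1..q. nn j) = n
              \<and> (\<forall>j\<in>{1..q}. \<forall>k\<in>{1..q}.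
                   (\<Sum>i=1..n. u j i * u k i) = (if j = k then real (nn j) else 0))))"
  (is "(?C \<longleftrightarrow> ?P) \<and> (?C \<longleftrightarrow> ?U)")
proof -
  have "m \<ge> 1"
    using assms(1) by simp
  have "?C \<Longrightarrow> ?P"
  proof -
    assume ?C
    then obtain q u where "\<forall>j\<in>{1..q}. binary_vec n (u j)" "is_sum_of_powers m n A q u"
      unfolding zero_one_cp_def by blast
    then obtain P where P: "partition_on {1..n} P" "E = complete_block_edges m P"
      using binary_decomposition_imp_block_partition[OF \<open>m \<ge> 1\<close> assms(3-6)] by blast
    obtain q :: nat and V where V: "q \<ge> 1" "\<forall>i\<in>{1..q}. V i \<noteq> {}"
      "disjoint_family_on V {1..q}" "V ` {1..q} = P"
      using partition_on_enumeration[OF _ _ P(1)] assms(2) by auto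
    have "(\<Union>i\<in>{1..q}. V i) = {1..n}"
      using P(1) V(4) by (simp add: partition_on_def)
    moreover have "E = {M. size M = m \<and> (\<exists>i\<in>{1..q}. set_mset M \<subseteq> V i)}"
      using P(2) V(4) by (auto simp: complete_block_edges_def)
    ultimately show ?P
      using V(1-3) unfolding disjoint_family_on_def by (intro exI[of _ q] exI[of _ V]) simp
  qed
  moreover have "?P \<Longrightarrow> ?U"
  proof -
    assume ?P
    then obtain q :: nat and V where "q \<ge> 1" "\<forall>i\<in>{1..q}. V i \<noteq> {}"
      "disjoint_family_on V {1..q}" "(\<Union>i\<in>{1..q}. V i) = {1..n}"
      "E = {M. size M = m \<and> (\<exists>i\<in>{1..q}. set_mset M \<subseteq> V i)}"
      unfolding disjoint_family_on_def by blast
    then show ?U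
      by (rule block_indexing_imp_orthogonal_decomposition[OF \<open>m \<ge> 1\<close> assms(6)])
  qed
  moreover have "?U \<Longrightarrow> ?C"
    using assms(3) unfolding zero_one_cp_def SF_def by blast
  ultimately show ?thesis by blast
qed

end
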